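(* Let $E$ be a reflexive Banach space with $E = V \oplus W$ ($V, W$ linear subspaces, $\dim V < +\infty$), and let $\Phi\colon E \to \mathbb{R}$ be locally Lipschitz and satisfy: (i) $\Phi(w) \to +\infty$ as $\|w\| \to \infty$, $w \in W$; (ii$''$) for every $w \in W$, the map $v \mapsto \Phi(v+w)$ is strictly quasi-concave on $V$; (iii) $\Phi(v+w) \to -\infty$ as $\|v\| \to +\infty$ ($v \in V$), uniformly for $w$ in bounded subsets of $W$; (iv) for every $v \in V$, the map $w \mapsto \Phi(v+w)$ is weakly lower semi-continuous on $W$. Then, writing $s(w)$ for the unique maximizer of $v\mapsto\Phi(v+w)$ on $V$, there is $\overline{w}\in W$ minimizing $w\mapsto\max_{v\in V}\Phi(v+w)$ such that $\overline{u} = s(\overline{w}) + \overline{w}$ is a critical point of $\Phi$ (i.e. $0 \in \partial\Phi(\overline{u})$) and $$\Phi(\overline{u}) = \min_{w \in W} \max_{v \in V} \Phi(v+w).$$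
   Context: A function $f\colon V\to\mathbb{R}$ is strictly quasi-concave if $f(tx+(1-t)y) > \min\{f(x),f(y)\}$ for all $x \neq y$ in $V$ and $t \in (0,1)$. For a locally Lipschitz $\Phi$, $\Phi^\circ(x;v) = \limsup_{y \to x,\, t \downarrow 0} \frac{\Phi(y+tv) - \Phi(y)}{t}$ and the Clarke subdifferential is $\partial\Phi(x) = \{x^* \in E^* : \Phi^\circ(x;v) \ge \langle x^*, v\rangle \ \forall v \in E\}$; $x$ is a critical point if $0 \in \partial\Phi(x)$. *)

theory Defs
  imports "HOL-Analysis.Analysis"
begin

definition reflexive_space :: "'a::real_normed_vector itself \<Rightarrow> bool" where
  "reflexive_space _ \<longleftrightarrow>
     (\<forall>\<phi> :: ('a \<Rightarrow>\<^sub>L real) \<Rightarrow>\<^sub>L real. \<exists>x::'a. \<forall>f. blinfun_apply \<phi> f = blinfun_apply f x)"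

definition locally_lipschitz :: "('a::real_normed_vector \<Rightarrow> real) \<Rightarrow> bool" where
  "locally_lipschitz \<Phi> \<longleftrightarrow>
     (\<forall>x. \<exists>\<epsilon>>0. \<exists>L. \<forall>y\<in>ball x \<epsilon>. \<forall>z\<in>ball x \<epsilon>. \<bar>\<Phi> y - \<Phi> z\<bar> \<le> L * norm (y - z))"

definition strictly_quasi_concave_on :: "'a::real_vector set \<Rightarrow> ('a \<Rightarrow> real) \<Rightarrow> bool" where
  "strictly_quasi_concave_on S f \<longleftrightarrow>
     (\<forall>x\<in>S. \<forall>y\<in>S. \<forall>t::real. x \<noteq> y \<and> 0 < t \<and> t < 1 \<longrightarrow>
        f (t *\<^sub>R x + (1 - t) *\<^sub>R y) > min (f x) (f y))"

text \<open>Weak lower semicontinuity on S (weak topology of E relativised to S),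
  using the standard neighbourhood basis of the weak topology.\<close>
definition weakly_lsc_on :: "'a::real_normed_vector set \<Rightarrow> ('a \<Rightarrow> real) \<Rightarrow> bool" where
  "weakly_lsc_on S g \<longleftrightarrow>
     (\<forall>w0\<in>S. \<forall>c. c < g w0 \<longrightarrow>
        (\<exists>F :: ('a \<Rightarrow>\<^sub>L real) set. \<exists>\<epsilon>>0. finite F \<and>
           (\<forall>w\<in>S. (\<forall>f\<in>F. \<bar>blinfun_apply f (w - w0)\<bar> < \<epsilon>) \<longrightarrow> c < g w)))"

definition clarke_dd :: "('a::real_normed_vector \<Rightarrow> real) \<Rightarrow> 'a \<Rightarrow> 'a \<Rightarrow> ereal" where
  "clarke_dd \<Phi> x v =
     Limsup (nhds x \<times>\<^sub>F at_right (0::real)) (\<lambda>(y, t). ereal ((\<Phi> (y + t *\<^sub>R v) - \<Phi> y) / t))"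

definition clarke_subdiff :: "('a::real_normed_vector \<Rightarrow> real) \<Rightarrow> 'a \<Rightarrow> ('a \<Rightarrow>\<^sub>L real) set" where
  "clarke_subdiff \<Phi> x = {xs. \<forall>v. clarke_dd \<Phi> x v \<ge> ereal (blinfun_apply xs v)}"

end

theory Submission
  imports Defs
begin

(* For each w in W, (ii) and (iii) give a unique maximiser s w of v \<mapsto> \<Phi> (v + w) on the
   finite-dimensional V. The marginal function m w = \<Phi> (s w + w) is a pointwise maximum of weakly
   lower semicontinuous functions and dominates \<Phi> on W, so it is weakly lsc and coercive. W is
   weakly closed, being closed (by (i) and (iii)) with a finite-dimensional complement, and in a
   reflexive space bounded filters have weak cluster points; hence m attains its minimum at some
   wbar. The point ubar = s wbar + wbar is then a saddle point,
   \<Phi> (v + wbar) \<le> \<Phi> ubar \<le> \<Phi> (s w + w), and since maximisers along a ray w + t d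
   accumulate at s w, every Clarke directional derivative at ubar is nonnegative. *)

lemma locally_lipschitz_imp_isCont:
  assumes "locally_lipschitz \<Phi>"
  shows "isCont \<Phi> x"
proof -
  obtain \<epsilon> L where "\<epsilon> > 0" and L: "\<forall>y\<in>ball x \<epsilon>. \<forall>z\<in>ball x \<epsilon>. \<bar>\<Phi> y - \<Phi> z\<bar> \<le> L * norm (y - z)"
    using assms unfolding locally_lipschitz_def by blast
  have "\<bar>L\<bar>-lipschitz_on (ball x \<epsilon>) \<Phi>"
  proof (unfold lipschitz_on_def, intro conjI abs_ge_zero ballI)
    fix y z assume "y \<in> ball x \<epsilon>" "z \<in> ball x \<epsilon>"
    then have "dist (\<Phi> y) (\<Phi> z) \<le> L * dist y z" using L by (simp add: dist_real_def dist_norm)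
    also have "\<dots> \<le> \<bar>L\<bar> * dist y z" by (simp add: mult_right_mono)
    finally show "dist (\<Phi> y) (\<Phi> z) \<le> \<bar>L\<bar> * dist y z" .
  qed
  then have "continuous_on (ball x \<epsilon>) \<Phi>" by (rule lipschitz_on_continuous_on)
  then show ?thesis using \<open>\<epsilon> > 0\<close> by (simp add: continuous_on_interior)
qed

(* A nonzero V-component v of a point of closure W would, after scaling, be a point of V where
   \<Phi> \<le> 0 that is a limit of points of W where \<Phi> \<ge> 1. *)
lemma closed_subspace_if_coercive_anticoercive:
  fixes \<Phi> :: "'a::real_normed_vector \<Rightarrow> real"
  assumes cont: "\<And>x. isCont \<Phi> x"
    and subV: "subspace V" and subW: "subspace W" and dsum: "\<forall>u. \<exists>v\<in>V. \<exists>w\<in>W. u = v + w"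
    and up: "\<forall>M. \<exists>R. \<forall>w\<in>W. norm w \<ge> R \<longrightarrow> \<Phi> w \<ge> M"
    and down: "\<forall>M. \<exists>R. \<forall>v\<in>V. norm v \<ge> R \<longrightarrow> \<Phi> v \<le> M"
  shows "closed W"
proof -
  have "x \<in> W" if "x \<in> closure W" for x
  proof -
    obtain v w where v: "v \<in> V" and w: "w \<in> W" and x: "x = v + w" using dsum by blast
    obtain ws where ws: "\<forall>n. ws n \<in> W" "ws \<longlonglongrightarrow> x"
      using \<open>x \<in> closure W\<close> closure_sequential by blast
    have "v = 0"
    proof (rule ccontr)
      assume "v \<noteq> 0"
      obtain R1 where R1: "\<forall>v\<in>V. norm v \<ge> R1 \<longrightarrow> \<Phi> v \<le> 0" using down by blast
      obtain R2 where R2: "\<forall>w\<in>W. norm w \<ge> R2 \<longrightarrow> \<Phi> w \<ge> 1" using up by blast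
      define c where "c = (\<bar>R1\<bar> + \<bar>R2\<bar> + 1) / norm v"
      define zs where "zs n = c *\<^sub>R (ws n - w)" for n
      have "c *\<^sub>R v \<in> V" using subV v by (simp add: subspace_scale)
      moreover have norm_cv: "norm (c *\<^sub>R v) = \<bar>R1\<bar> + \<bar>R2\<bar> + 1"
        using \<open>v \<noteq> 0\<close> by (simp add: c_def)
      ultimately have "\<Phi> (c *\<^sub>R v) \<le> 0" using R1 by simp
      have "zs \<longlonglongrightarrow> c *\<^sub>R v"
      proof -
        have "(\<lambda>n. ws n - w) \<longlonglongrightarrow> v" using tendsto_diff[OF ws(2) tendsto_const, of w] x by simp
        then show ?thesis unfolding zs_def by (rule tendsto_scaleR[OF tendsto_const])
      qed
      then have "\<forall>\<^sub>F n in sequentially. R2 < norm (zs n)"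
        by (rule order_tendstoD[OF tendsto_norm]) (use norm_cv in linarith)
      moreover have "zs n \<in> W" for n
        unfolding zs_def using subW ws(1) w by (simp add: subspace_scale subspace_diff)
      ultimately have "\<forall>\<^sub>F n in sequentially. 1 \<le> \<Phi> (zs n)"
        using R2 by (simp add: eventually_mono)
      then have "1 \<le> \<Phi> (c *\<^sub>R v)"
        by (rule tendsto_lowerbound[OF isCont_tendsto_compose[OF cont \<open>zs \<longlonglongrightarrow> _\<close>]]) simp
      then show False using \<open>\<Phi> (c *\<^sub>R v) \<le> 0\<close> by simp
    qed
    then show ?thesis using x w by simp
  qed
  then show ?thesis using closure_subset_eq by blast
qed

lemma span_finite_independent:
  fixes B :: "'a::real_vector set"
  assumes "finite B"
  obtains B' where "finite B'" "independent B'" "span B' = span B"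
proof -
  obtain B' where "B' \<subseteq> B" "independent B'" "B \<subseteq> span B'"
    by (rule maximal_independent_subset)
  moreover have "span B' = span B"
    using calculation by (intro subset_antisym span_mono span_minimal[OF _ subspace_span]) auto
  ultimately show thesis using that finite_subset[OF _ assms] by blast
qed

lemma compact_coefficient_box:
  "compact (PiE UNIV (\<lambda>i::'a. if i \<in> B then {-r..r} else {0::real}))"
proof -
  have "compactin (product_topology (\<lambda>i. euclidean) UNIV)
      (PiE UNIV (\<lambda>i::'a. if i \<in> B then {-r..r} else {0::real}))"
    unfolding compactin_PiE by auto
  then show ?thesis by (simp add: euclidean_product_topology)
qed

lemma continuous_on_coefficient_sum:
  "continuous_on A (\<lambda>c::'a \<Rightarrow> real. (\<Sum>b\<in>B. c b *\<^sub>R (b::'a::real_normed_vector)))"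
  by (intro continuous_intros continuous_on_subset[OF continuous_on_product_coordinates]) auto

lemma coefficient_sphere_infdist_lower_bound:
  fixes B W :: "'a::real_normed_vector set"
  assumes finB: "finite B" and indB: "independent B" and clW: "closed W" and subW: "subspace W"
    and int: "span B \<inter> W = {0}"
  obtains \<delta> where "\<delta> > 0"
    "\<And>c. (\<And>i. i \<notin> B \<Longrightarrow> c i = 0) \<Longrightarrow> (\<Sum>b\<in>B. \<bar>c b\<bar>) = 1 \<Longrightarrow> \<delta> \<le> infdist (\<Sum>b\<in>B. c b *\<^sub>R b) W"
proof -
  define L where "L c = (\<Sum>b\<in>B. c b *\<^sub>R b)" for c :: "'a \<Rightarrow> real"
  define S where "S = PiE UNIV (\<lambda>i. if i \<in> B then {-1..1::real} else {0}) \<inter> {c. (\<Sum>b\<in>B. \<bar>c b\<bar>) = 1}"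
  have inS: "c \<in> S" if outside: "\<And>i. i \<notin> B \<Longrightarrow> c i = 0" and sum: "(\<Sum>b\<in>B. \<bar>c b\<bar>) = 1" for c
  proof -
    have "c i \<in> {-1..1}" if "i \<in> B" for i
    proof -
      have "\<bar>c i\<bar> \<le> 1" using member_le_sum[of i B "\<lambda>b. \<bar>c b\<bar>"] that finB sum by simp
      then show ?thesis unfolding atLeastAtMost_iff by arith
    qed
    then show ?thesis unfolding S_def using outside sum by (auto simp: PiE_iff)
  qed
  show thesis
  proof (cases "S = {}")
    case True
    show thesis by (rule that[of 1]) (use inS True in auto)
  next
    case False
    have "closed {c::'a \<Rightarrow> real. (\<Sum>b\<in>B. \<bar>c b\<bar>) = 1}"
      by (intro closed_Collect_eq continuous_intros continuous_on_subset[OF continuous_on_product_coordinates]) auto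
    then have "compact S" unfolding S_def using compact_coefficient_box by blast
    moreover have "continuous_on S (\<lambda>c. infdist (L c) W)"
      unfolding L_def by (intro continuous_on_infdist continuous_on_coefficient_sum)
    ultimately obtain c0 where c0: "c0 \<in> S" and c0_min: "\<forall>c\<in>S. infdist (L c0) W \<le> infdist (L c) W"
      using continuous_attains_inf False by blast
    have "infdist (L c0) W > 0"
    proof (rule ccontr)
      assume "\<not> infdist (L c0) W > 0"
      then have "L c0 \<in> closure W"
        using infdist_nonneg[of "L c0" W] in_closure_iff_infdist_zero[of W] subspace_0[OF subW] by fastforce
      moreover have "L c0 \<in> span B" unfolding L_def by (intro span_sum span_scale span_base)
      ultimately have "L c0 = 0" using clW int by auto
      then have "\<forall>b\<in>B. c0 b = 0" using indB finB unfolding L_def by (auto simp: dependent_finite)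
      with c0 show False unfolding S_def by simp
    qed
    then show thesis using that c0_min inS unfolding L_def by blast
  qed
qed

lemma independent_sum_norm_lower_bound:
  fixes B W :: "'a::real_normed_vector set"
  assumes "finite B" and "independent B" and "closed W" and subW: "subspace W"
    and "span B \<inter> W = {0}"
  shows "\<exists>\<delta>>0. \<forall>c. \<forall>w\<in>W. \<delta> * (\<Sum>b\<in>B. \<bar>c b\<bar>) \<le> norm ((\<Sum>b\<in>B. c b *\<^sub>R b) + w)"
proof -
  obtain \<delta> where "\<delta> > 0"
    and \<delta>: "\<And>c. (\<And>i. i \<notin> B \<Longrightarrow> c i = 0) \<Longrightarrow> (\<Sum>b\<in>B. \<bar>c b\<bar>) = 1 \<Longrightarrow> \<delta> \<le> infdist (\<Sum>b\<in>B. c b *\<^sub>R b) W"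
    using coefficient_sphere_infdist_lower_bound[OF assms] by blast
  define L where "L c = (\<Sum>b\<in>B. c b *\<^sub>R b)" for c :: "'a \<Rightarrow> real"
  have "\<delta> * (\<Sum>b\<in>B. \<bar>c b\<bar>) \<le> norm (L c + w)" if "w \<in> W" for c w
  proof (cases "(\<Sum>b\<in>B. \<bar>c b\<bar>) = 0")
    case False
    define s where "s = (\<Sum>b\<in>B. \<bar>c b\<bar>)"
    have "s > 0" using False unfolding s_def by (simp add: order_less_le sum_nonneg)
    define c' where "c' i = (if i \<in> B then c i / s else 0)" for i
    have "(\<Sum>b\<in>B. \<bar>c' b\<bar>) = 1"
      using \<open>s > 0\<close> by (simp add: c'_def abs_divide sum_divide_distrib[symmetric] s_def)
    then have "\<delta> \<le> infdist (L c') W" unfolding L_def by (intro \<delta>) (simp add: c'_def)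
    also have "\<dots> \<le> dist (L c') (- ((1/s) *\<^sub>R w))"
      using that subW by (intro infdist_le) (simp add: subspace_neg subspace_scale)
    also have "L c' = (1/s) *\<^sub>R L c" unfolding L_def c'_def by (simp add: scaleR_sum_right)
    also have "dist ((1/s) *\<^sub>R L c) (- ((1/s) *\<^sub>R w)) = norm (L c + w) / s"
      using \<open>s > 0\<close> by (simp add: dist_norm scaleR_add_right[symmetric])
    finally show ?thesis using \<open>s > 0\<close> by (simp add: s_def le_divide_eq mult.commute)
  qed simp
  then show ?thesis using \<open>\<delta> > 0\<close> unfolding L_def by blast
qed

lemma compact_span_inter_cball:
  fixes B :: "'a::real_normed_vector set"
  assumes "finite B"
  shows "compact (span B \<inter> cball 0 r)"
proof -
  obtain B' where finB': "finite B'" and indB': "independent B'" and spanB': "span B' = span B"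
    using span_finite_independent[OF assms] .
  obtain \<delta> where "\<delta> > 0" and \<delta>: "\<forall>c. \<delta> * (\<Sum>b\<in>B'. \<bar>c b\<bar>) \<le> norm (\<Sum>b\<in>B'. c b *\<^sub>R b)"
    using independent_sum_norm_lower_bound[OF finB' indB', of "{0}"] by (auto simp: span_zero)
  define L where "L c = (\<Sum>b\<in>B'. c b *\<^sub>R b)" for c :: "'a \<Rightarrow> real"
  define Q where "Q = PiE UNIV (\<lambda>i. if i \<in> B' then {-(r/\<delta>)..r/\<delta>} else {0})"
  have "compact (L ` Q)" unfolding L_def Q_def
    by (intro compact_continuous_image continuous_on_coefficient_sum compact_coefficient_box)
  moreover have "span B' \<inter> cball 0 r = L ` Q \<inter> cball 0 r"
  proof (intro equalityI subsetI)
    fix v assume v: "v \<in> span B' \<inter> cball 0 r"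
    define c where "c = representation B' v"
    have Lc: "L c = v" unfolding L_def c_def using v finB' indB' by (simp add: sum_representation_eq)
    have "c i \<in> {-(r/\<delta>)..r/\<delta>}" if "i \<in> B'" for i
    proof -
      have "\<bar>c i\<bar> \<le> (\<Sum>b\<in>B'. \<bar>c b\<bar>)" using that finB' by (intro member_le_sum) auto
      also have "\<dots> \<le> norm v / \<delta>"
        using \<delta>[rule_format, of c] Lc \<open>\<delta> > 0\<close> unfolding L_def by (simp add: le_divide_eq mult.commute)
      also have "\<dots> \<le> r / \<delta>" using v \<open>\<delta> > 0\<close> by (simp add: divide_right_mono)
      finally have "\<bar>c i\<bar> \<le> r / \<delta>" .
      then show ?thesis unfolding atLeastAtMost_iff by arith
    qed
    moreover have "c i = 0" if "i \<notin> B'" for i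
      using that representation_ne_zero unfolding c_def by blast
    ultimately have "c \<in> Q" unfolding Q_def by (auto simp: PiE_iff)
    then show "v \<in> L ` Q \<inter> cball 0 r" using Lc v by auto
  next
    fix v assume "v \<in> L ` Q \<inter> cball 0 r"
    then show "v \<in> span B' \<inter> cball 0 r"
      unfolding L_def by (auto intro: span_sum span_scale span_base)
  qed
  ultimately show ?thesis unfolding spanB' by auto
qed

lemma direct_sum_projection:
  fixes V W :: "'a::real_vector set"
  assumes subV: "subspace V" and subW: "subspace W" and int: "V \<inter> W = {0}"
    and dsum: "\<forall>u. \<exists>v\<in>V. \<exists>w\<in>W. u = v + w"
  obtains P where "linear P" "\<And>u. P u \<in> V" "\<And>u. u - P u \<in> W" "\<And>w. w \<in> W \<Longrightarrow> P w = 0"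
proof -
  have uniq: "v1 = v2" if "v1 \<in> V" "v2 \<in> V" "u - v1 \<in> W" "u - v2 \<in> W" for u v1 v2
  proof -
    have "v1 - v2 = (u - v2) - (u - v1)" by simp
    then have "v1 - v2 \<in> V \<inter> W" using subV subW that by (metis IntI subspace_diff)
    then show ?thesis using int by simp
  qed
  define P where "P u = (SOME v. v \<in> V \<and> u - v \<in> W)" for u
  have P: "P u \<in> V \<and> u - P u \<in> W" for u
  proof -
    obtain v w where "v \<in> V" "w \<in> W" "u = v + w" using dsum by blast
    then have "\<exists>v. v \<in> V \<and> u - v \<in> W" by auto
    then show ?thesis unfolding P_def by (rule someI_ex)
  qed
  have "linear P"
  proof (rule linearI)
    fix x y :: 'a and c :: real
    have "(x + y) - (P x + P y) = (x - P x) + (y - P y)" by simp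
    then show "P (x + y) = P x + P y"
      using P[of x] P[of y] P[of "x + y"] subV subW by (metis subspace_add uniq)
    have "c *\<^sub>R x - c *\<^sub>R P x = c *\<^sub>R (x - P x)" by (simp add: scaleR_diff_right)
    then show "P (c *\<^sub>R x) = c *\<^sub>R P x"
      using P[of x] P[of "c *\<^sub>R x"] subV subW by (metis subspace_scale uniq)
  qed
  moreover have "P w = 0" if "w \<in> W" for w
    using uniq[of "P w" 0 w] P[of w] that subV by (simp add: subspace_0)
  ultimately show thesis using that P by blast
qed

lemma bounded_linear_projection_coordinate:
  fixes B W :: "'a::real_normed_vector set"
  assumes finB: "finite B" and indB: "independent B" and clW: "closed W" and subW: "subspace W"
    and int: "span B \<inter> W = {0}"
    and "linear P" and PV: "\<And>u. P u \<in> span B" and PW: "\<And>u. u - P u \<in> W"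
  shows "bounded_linear (\<lambda>u. representation B (P u) b)"
proof -
  obtain \<delta> where "\<delta> > 0"
    and \<delta>: "\<forall>c. \<forall>w\<in>W. \<delta> * (\<Sum>b\<in>B. \<bar>c b\<bar>) \<le> norm ((\<Sum>b\<in>B. c b *\<^sub>R b) + w)"
    using independent_sum_norm_lower_bound[OF finB indB clW subW int] by blast
  define coord where "coord b u = representation B (P u) b" for b u
  have P_sum: "(\<Sum>b\<in>B. coord b u *\<^sub>R b) = P u" for u
    unfolding coord_def using PV finB indB by (simp add: sum_representation_eq)
  have "bounded_linear (coord b)"
  proof (rule bounded_linear_intro[where K="1/\<delta>"])
    show "coord b (x + y) = coord b x + coord b y" for x y
      unfolding coord_def using PV indB by (simp add: linear_add[OF \<open>linear P\<close>] representation_add)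
    show "coord b (r *\<^sub>R x) = r *\<^sub>R coord b x" for r x
      unfolding coord_def using PV indB by (simp add: linear_scale[OF \<open>linear P\<close>] representation_scale)
    show "norm (coord b x) \<le> norm x * (1/\<delta>)" for x
    proof (cases "b \<in> B")
      case True
      have "\<bar>coord b x\<bar> \<le> (\<Sum>b\<in>B. \<bar>coord b x\<bar>)" using True finB by (intro member_le_sum) auto
      also have "\<delta> * (\<Sum>b\<in>B. \<bar>coord b x\<bar>) \<le> norm ((\<Sum>b\<in>B. coord b x *\<^sub>R b) + (x - P x))"
        by (rule \<delta>[rule_format, OF PW])
      then have "(\<Sum>b\<in>B. \<bar>coord b x\<bar>) \<le> norm x * (1/\<delta>)"
        using \<open>\<delta> > 0\<close> by (simp add: P_sum le_divide_eq mult.commute)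
      finally show ?thesis by simp
    next
      case False
      then have "coord b x = 0" unfolding coord_def using representation_ne_zero by blast
      then show ?thesis using \<open>\<delta> > 0\<close> by simp
    qed
  qed
  then show ?thesis unfolding coord_def .
qed

(* The coordinates of the projection onto span B along W; they are bounded because W is closed. *)
lemma finite_complement_kernel_functionals:
  fixes B W :: "'a::real_normed_vector set"
  assumes finB: "finite B" and clW: "closed W" and subW: "subspace W"
    and int: "span B \<inter> W = {0}" and dsum: "\<forall>u. \<exists>v\<in>span B. \<exists>w\<in>W. u = v + w"
  obtains G :: "('a \<Rightarrow>\<^sub>L real) set" where
    "\<And>g w. g \<in> G \<Longrightarrow> w \<in> W \<Longrightarrow> blinfun_apply g w = 0"
    "\<And>x. \<forall>g\<in>G. blinfun_apply g x = 0 \<Longrightarrow> x \<in> W"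
proof -
  obtain B' where finB': "finite B'" and indB': "independent B'" and spanB': "span B' = span B"
    using span_finite_independent[OF finB] .
  obtain P where "linear P" and PV: "\<And>u. P u \<in> span B'" and PW: "\<And>u. u - P u \<in> W"
    and P0: "\<And>w. w \<in> W \<Longrightarrow> P w = 0"
    using direct_sum_projection[OF subspace_span subW] int dsum unfolding spanB' by metis
  define coord where "coord b u = representation B' (P u) b" for b u
  have "bounded_linear (coord b)" for b
    unfolding coord_def using int spanB'
    by (intro bounded_linear_projection_coordinate[OF finB' indB' clW subW _ \<open>linear P\<close> PV PW]) simp
  then have coord_apply: "blinfun_apply (Blinfun (coord b)) = coord b" for b
    by (rule bounded_linear_Blinfun_apply)
  define G where "G = (\<lambda>b. Blinfun (coord b)) ` B'"
  have vanish: "blinfun_apply g w = 0" if "g \<in> G" "w \<in> W" for g w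
    using that unfolding G_def by (auto simp: coord_apply coord_def P0 representation_zero)
  have kernel: "x \<in> W" if "\<forall>g\<in>G. blinfun_apply g x = 0" for x
  proof -
    have "coord b x = 0" for b
    proof (cases "b \<in> B'")
      case True
      then show ?thesis using that unfolding G_def by (auto simp: coord_apply)
    next
      case False
      then show ?thesis unfolding coord_def using representation_ne_zero by blast
    qed
    have "P x = (\<Sum>b\<in>B'. coord b x *\<^sub>R b)"
      unfolding coord_def using indB' PV finB' by (simp add: sum_representation_eq)
    also have "\<dots> = 0" using \<open>\<And>b. coord b x = 0\<close> by simp
    finally show ?thesis using PW[of x] by simp
  qed
  show thesis by (rule that[OF vanish kernel])
qed

definition weak_cluster_point :: "'a::real_normed_vector filter \<Rightarrow> 'a \<Rightarrow> bool" where
  "weak_cluster_point F x \<longleftrightarrow>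
     (\<forall>G::('a \<Rightarrow>\<^sub>L real) set. finite G \<longrightarrow> (\<forall>\<epsilon>>0. \<exists>\<^sub>F u in F. \<forall>f\<in>G. \<bar>blinfun_apply f u - blinfun_apply f x\<bar> < \<epsilon>))"

definition weakly_closed :: "'a::real_normed_vector set \<Rightarrow> bool" where
  "weakly_closed S \<longleftrightarrow> (\<forall>x. weak_cluster_point (principal S) x \<longrightarrow> x \<in> S)"

lemma weakly_closedD:
  assumes "weakly_closed S" and "weak_cluster_point F x" and "eventually (\<lambda>u. u \<in> S) F"
  shows "x \<in> S"
proof -
  have "\<exists>\<^sub>F u in principal S. Q u" if freq: "\<exists>\<^sub>F u in F. Q u" for Q
  proof -
    obtain u where "u \<in> S" "Q u"
      using frequently_ex[OF frequently_eventually_conj[OF freq assms(3)]] by blast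
    then show ?thesis by (auto simp: frequently_def eventually_principal)
  qed
  then have "weak_cluster_point (principal S) x"
    using assms(2) unfolding weak_cluster_point_def by blast
  then show ?thesis using assms(1) unfolding weakly_closed_def by blast
qed

lemma weakly_closed_finite_complement:
  fixes B W :: "'a::real_normed_vector set"
  assumes "finite B" and "closed W" and "subspace W"
    and "span B \<inter> W = {0}" and "\<forall>u. \<exists>v\<in>span B. \<exists>w\<in>W. u = v + w"
  shows "weakly_closed W"
  unfolding weakly_closed_def
proof (intro allI impI)
  fix x assume cluster: "weak_cluster_point (principal W) x"
  obtain G :: "('a \<Rightarrow>\<^sub>L real) set" where G0: "\<And>g w. g \<in> G \<Longrightarrow> w \<in> W \<Longrightarrow> blinfun_apply g w = 0"
    and GW: "\<And>u. \<forall>g\<in>G. blinfun_apply g u = 0 \<Longrightarrow> u \<in> W"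
    using finite_complement_kernel_functionals[OF assms] by blast
  have "blinfun_apply g x = 0" if "g \<in> G" for g
  proof (rule ccontr)
    assume "blinfun_apply g x \<noteq> 0"
    then have "\<exists>\<^sub>F u in principal W. \<forall>f\<in>{g}. \<bar>blinfun_apply f u - blinfun_apply f x\<bar> < \<bar>blinfun_apply g x\<bar>"
      using cluster[unfolded weak_cluster_point_def, rule_format, of "{g}" "\<bar>blinfun_apply g x\<bar>"] by simp
    then obtain u where "u \<in> W" "\<bar>blinfun_apply g u - blinfun_apply g x\<bar> < \<bar>blinfun_apply g x\<bar>"
      by (auto simp: frequently_def eventually_principal)
    then show False using G0[OF that] by simp
  qed
  then show "x \<in> W" using GW by blast
qed

(* Tychonoff: u \<mapsto> (\<lambda>f. f u) maps the bounded part of F into the compact product of the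
   intervals [-R * norm f, R * norm f]. *)
lemma bounded_filter_pointwise_cluster:
  fixes F :: "'a::real_normed_vector filter"
  assumes "F \<noteq> bot" and bnd: "eventually (\<lambda>u. norm u \<le> R) F"
  obtains \<phi> :: "('a \<Rightarrow>\<^sub>L real) \<Rightarrow> real" where "\<And>f. \<bar>\<phi> f\<bar> \<le> R * norm f"
    and "\<And>G \<epsilon>. finite G \<Longrightarrow> \<epsilon> > 0 \<Longrightarrow> \<exists>\<^sub>F u in F. \<forall>f\<in>G. \<bar>blinfun_apply f u - \<phi> f\<bar> < \<epsilon>"
proof -
  define J where "J u = (\<lambda>f::'a \<Rightarrow>\<^sub>L real. blinfun_apply f u)" for u
  define K where "K = PiE UNIV (\<lambda>f::'a \<Rightarrow>\<^sub>L real. cball (0::real) (R * norm f))"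
  have "compactin (product_topology (\<lambda>i. euclidean) UNIV) K"
    unfolding K_def compactin_PiE by auto
  then have "compact K" by (simp add: euclidean_product_topology)
  moreover have "eventually (\<lambda>\<psi>. \<psi> \<in> K) (filtermap J F)"
    unfolding eventually_filtermap
  proof (rule eventually_mono[OF bnd])
    fix u :: 'a assume "norm u \<le> R"
    then have "\<bar>blinfun_apply f u\<bar> \<le> R * norm f" for f
      using norm_blinfun[of f u] by (smt (verit, best) mult.commute mult_left_mono norm_ge_zero real_norm_def)
    then show "J u \<in> K" unfolding K_def J_def by auto
  qed
  moreover have "filtermap J F \<noteq> bot" using \<open>F \<noteq> bot\<close> by (simp add: filtermap_bot_iff)
  ultimately obtain \<phi> where "\<phi> \<in> K" and cluster: "inf (nhds \<phi>) (filtermap J F) \<noteq> bot"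
    unfolding compact_filter by blast
  have "\<exists>\<^sub>F u in F. \<forall>f\<in>G. \<bar>blinfun_apply f u - \<phi> f\<bar> < \<epsilon>" if "finite G" "\<epsilon> > 0" for G \<epsilon>
  proof (rule ccontr)
    assume none: "\<not> ?thesis"
    define U where "U = {\<psi>. \<forall>f\<in>G. \<psi> (id f) \<in> ball (\<phi> f) \<epsilon>}"
    have "open U" unfolding U_def by (rule product_topology_basis') (use that in auto)
    moreover have "\<phi> \<in> U" unfolding U_def using that by auto
    ultimately have "eventually (\<lambda>\<psi>. \<psi> \<in> U) (nhds \<phi>)" by (rule eventually_nhds_in_open)
    moreover have "eventually (\<lambda>\<psi>. \<psi> \<notin> U) (filtermap J F)"
      using none unfolding frequently_def eventually_filtermap U_def J_def
      by (auto simp: dist_real_def abs_minus_commute elim!: eventually_mono)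
    ultimately have "eventually (\<lambda>_. False) (inf (nhds \<phi>) (filtermap J F))"
      unfolding eventually_inf by blast
    with cluster show False by (simp add: eventually_False)
  qed
  moreover have "\<bar>\<phi> f\<bar> \<le> R * norm f" for f
    using \<open>\<phi> \<in> K\<close> unfolding K_def by (auto simp: PiE_iff)
  ultimately show thesis using that by blast
qed

lemma pointwise_cluster_linear:
  fixes \<phi> :: "('a::real_normed_vector \<Rightarrow>\<^sub>L real) \<Rightarrow> real"
  assumes approx: "\<And>G \<epsilon>. finite G \<Longrightarrow> \<epsilon> > 0 \<Longrightarrow> \<exists>u. \<forall>f\<in>G. \<bar>blinfun_apply f u - \<phi> f\<bar> < \<epsilon>"
  shows "linear \<phi>"
proof
  fix f g :: "'a \<Rightarrow>\<^sub>L real" and r :: real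
  have "\<bar>\<phi> (f + g) - (\<phi> f + \<phi> g)\<bar> \<le> e" if "e > 0" for e
  proof -
    obtain u where "\<forall>h\<in>{f, g, f + g}. \<bar>blinfun_apply h u - \<phi> h\<bar> < e / 3"
      using approx[of "{f, g, f + g}" "e / 3"] \<open>e > 0\<close> by auto
    then have "\<bar>blinfun_apply f u - \<phi> f\<bar> < e / 3" "\<bar>blinfun_apply g u - \<phi> g\<bar> < e / 3"
      "\<bar>blinfun_apply f u + blinfun_apply g u - \<phi> (f + g)\<bar> < e / 3"
      by (auto simp: blinfun.add_left)
    then show ?thesis by arith
  qed
  then show "\<phi> (f + g) = \<phi> f + \<phi> g" using dense_eq0_I[of "\<phi> (f + g) - (\<phi> f + \<phi> g)"] by simp
  have "\<bar>\<phi> (r *\<^sub>R f) - r * \<phi> f\<bar> \<le> e" if "e > 0" for e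
  proof -
    define \<epsilon> where "\<epsilon> = e / (1 + \<bar>r\<bar>)"
    have "\<epsilon> > 0" "(1 + \<bar>r\<bar>) * \<epsilon> = e" using \<open>e > 0\<close> unfolding \<epsilon>_def by (auto simp: field_simps)
    then obtain u where "\<forall>h\<in>{f, r *\<^sub>R f}. \<bar>blinfun_apply h u - \<phi> h\<bar> < \<epsilon>"
      using approx[of "{f, r *\<^sub>R f}" \<epsilon>] by auto
    then have a: "\<bar>r * blinfun_apply f u - \<phi> (r *\<^sub>R f)\<bar> < \<epsilon>"
      and b: "\<bar>blinfun_apply f u - \<phi> f\<bar> < \<epsilon>" by (auto simp: blinfun.scaleR_left)
    have "\<bar>r * blinfun_apply f u - r * \<phi> f\<bar> \<le> \<bar>r\<bar> * \<epsilon>"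
      using b by (simp add: abs_mult right_diff_distrib[symmetric] mult_left_mono)
    with a \<open>(1 + \<bar>r\<bar>) * \<epsilon> = e\<close> show ?thesis by (simp add: algebra_simps)
  qed
  then show "\<phi> (r *\<^sub>R f) = r *\<^sub>R \<phi> f" using dense_eq0_I[of "\<phi> (r *\<^sub>R f) - r * \<phi> f"] by simp
qed

lemma reflexive_bounded_filter_weak_cluster_point:
  fixes F :: "'a::real_normed_vector filter"
  assumes refl: "reflexive_space TYPE('a)" and "F \<noteq> bot"
    and "eventually (\<lambda>u. norm u \<le> R) F"
  obtains x where "weak_cluster_point F x"
proof -
  obtain \<phi> :: "('a \<Rightarrow>\<^sub>L real) \<Rightarrow> real" where bound: "\<And>f. \<bar>\<phi> f\<bar> \<le> R * norm f"
    and cluster: "\<And>G \<epsilon>. finite G \<Longrightarrow> \<epsilon> > 0 \<Longrightarrow> \<exists>\<^sub>F u in F. \<forall>f\<in>G. \<bar>blinfun_apply f u - \<phi> f\<bar> < \<epsilon>"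
    using bounded_filter_pointwise_cluster[OF assms(2,3)] by blast
  have "linear \<phi>" using cluster by (intro pointwise_cluster_linear) (blast dest: frequently_ex)
  then have "bounded_linear \<phi>"
    using bound by (intro bounded_linear.intro bounded_linear_axioms.intro) (auto simp: mult.commute)
  then have "blinfun_apply (Blinfun \<phi>) = \<phi>" by (rule bounded_linear_Blinfun_apply)
  with refl obtain x where "\<phi> f = blinfun_apply f x" for f
    unfolding reflexive_space_def by metis
  then have "weak_cluster_point F x" using cluster unfolding weak_cluster_point_def by simp
  then show thesis by (rule that)
qed

lemma strict_sublevel_filter:
  fixes g :: "'a \<Rightarrow> real"
  assumes "W \<noteq> {}" and lower: "\<And>w. w \<in> W \<Longrightarrow> \<exists>w'\<in>W. g w' < g w"
  obtains F where "F \<noteq> bot" "\<And>w. w \<in> W \<Longrightarrow> eventually (\<lambda>u. u \<in> W \<and> g u < g w) F"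
proof -
  define F where "F = (INF c\<in>g ` W. principal {w\<in>W. g w < c})"
  have evF: "eventually P F \<longleftrightarrow> (\<exists>c\<in>g ` W. eventually P (principal {w\<in>W. g w < c}))" for P
    unfolding F_def
  proof (rule eventually_INF_base)
    fix a b assume "a \<in> g ` W" "b \<in> g ` W"
    then show "\<exists>c\<in>g ` W. principal {w\<in>W. g w < c} \<le>
        inf (principal {w\<in>W. g w < a}) (principal {w\<in>W. g w < b})"
      by (intro bexI[of _ "min a b"]) (auto simp: min_def)
  qed (use \<open>W \<noteq> {}\<close> in auto)
  have "F \<noteq> bot"
  proof
    assume "F = bot"
    then obtain w where "w \<in> W" "{u\<in>W. g u < g w} = {}"
      using evF[of "\<lambda>_. False"] by (auto simp: eventually_principal)
    then show False using lower by blast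
  qed
  moreover have "eventually (\<lambda>u. u \<in> W \<and> g u < g w) F" if "w \<in> W" for w
    unfolding evF using that by (auto simp: eventually_principal)
  ultimately show thesis using that by blast
qed

(* Without a minimiser the strict sublevel sets generate a proper filter, bounded by coercivity;
   lower semicontinuity fails at its weak cluster point. *)
lemma weakly_lsc_coercive_attains_min:
  fixes g :: "'a::real_normed_vector \<Rightarrow> real"
  assumes refl: "reflexive_space TYPE('a)" and clW: "weakly_closed W" and "W \<noteq> {}"
    and lsc: "weakly_lsc_on W g" and coercive: "\<forall>M. \<exists>R. \<forall>w\<in>W. R \<le> norm w \<longrightarrow> M \<le> g w"
  shows "\<exists>wmin\<in>W. \<forall>w\<in>W. g wmin \<le> g w"
proof (rule ccontr)
  assume "\<not> ?thesis"
  then have lower: "\<exists>w'\<in>W. g w' < g w" if "w \<in> W" for w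
    using that not_le by blast
  then obtain F where "F \<noteq> bot" and below: "\<And>w. w \<in> W \<Longrightarrow> eventually (\<lambda>u. u \<in> W \<and> g u < g w) F"
    using strict_sublevel_filter[OF \<open>W \<noteq> {}\<close>] by blast
  obtain w0 where "w0 \<in> W" using \<open>W \<noteq> {}\<close> by blast
  obtain R where R: "\<forall>w\<in>W. R \<le> norm w \<longrightarrow> g w0 \<le> g w" using coercive by blast
  have "eventually (\<lambda>u. norm u \<le> R) F"
  proof (rule eventually_mono[OF below[OF \<open>w0 \<in> W\<close>]])
    fix u assume "u \<in> W \<and> g u < g w0"
    then show "norm u \<le> R" using R by force
  qed
  then obtain x where cluster: "weak_cluster_point F x"
    using reflexive_bounded_filter_weak_cluster_point[OF refl \<open>F \<noteq> bot\<close>] by blast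
  have "eventually (\<lambda>u. u \<in> W) F" using below[OF \<open>w0 \<in> W\<close>] by (rule eventually_mono) simp
  then have "x \<in> W" by (rule weakly_closedD[OF clW cluster])
  then obtain w1 where "w1 \<in> W" "g w1 < g x" using lower by blast
  then obtain G :: "('a \<Rightarrow>\<^sub>L real) set" and \<epsilon> where "\<epsilon> > 0" "finite G"
    and near: "\<forall>w\<in>W. (\<forall>f\<in>G. \<bar>blinfun_apply f (w - x)\<bar> < \<epsilon>) \<longrightarrow> g w1 < g w"
    using lsc \<open>x \<in> W\<close> unfolding weakly_lsc_on_def by blast
  have "\<exists>\<^sub>F u in F. \<forall>f\<in>G. \<bar>blinfun_apply f u - blinfun_apply f x\<bar> < \<epsilon>"
    using cluster \<open>\<epsilon> > 0\<close> \<open>finite G\<close> unfolding weak_cluster_point_def by blast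
  from frequently_ex[OF frequently_eventually_conj[OF this below[OF \<open>w1 \<in> W\<close>]]]
  obtain u where "u \<in> W" "g u < g w1" "\<forall>f\<in>G. \<bar>blinfun_apply f u - blinfun_apply f x\<bar> < \<epsilon>"
    by blast
  then have "g w1 < g u" using near by (simp add: blinfun.diff_right)
  with \<open>g u < g w1\<close> show False by simp
qed

lemma weakly_lsc_on_pointwise_max:
  fixes h :: "'i \<Rightarrow> 'a::real_normed_vector \<Rightarrow> real"
  assumes lsc: "\<And>i. i \<in> I \<Longrightarrow> weakly_lsc_on W (h i)"
    and le: "\<And>w i. w \<in> W \<Longrightarrow> i \<in> I \<Longrightarrow> h i w \<le> g w"
    and attained: "\<And>w. w \<in> W \<Longrightarrow> \<exists>i\<in>I. g w = h i w"
  shows "weakly_lsc_on W g"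
  unfolding weakly_lsc_on_def
proof (intro ballI allI impI)
  fix w0 c assume "w0 \<in> W" "c < g w0"
  then obtain i where "i \<in> I" "c < h i w0" using attained by force
  then obtain G :: "('a \<Rightarrow>\<^sub>L real) set" and \<epsilon> where "\<epsilon> > 0" "finite G"
    and near: "\<forall>w\<in>W. (\<forall>f\<in>G. \<bar>blinfun_apply f (w - w0)\<bar> < \<epsilon>) \<longrightarrow> c < h i w"
    using lsc \<open>w0 \<in> W\<close> unfolding weakly_lsc_on_def by blast
  have "\<forall>w\<in>W. (\<forall>f\<in>G. \<bar>blinfun_apply f (w - w0)\<bar> < \<epsilon>) \<longrightarrow> c < g w"
    using near le[OF _ \<open>i \<in> I\<close>] by (blast intro: less_le_trans)
  then show "\<exists>G::('a \<Rightarrow>\<^sub>L real) set. \<exists>\<epsilon>>0. finite G \<and>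
      (\<forall>w\<in>W. (\<forall>f\<in>G. \<bar>blinfun_apply f (w - w0)\<bar> < \<epsilon>) \<longrightarrow> c < g w)"
    using \<open>\<epsilon> > 0\<close> \<open>finite G\<close> by blast
qed

lemma strictly_quasi_concave_on_max_unique:
  assumes sqc: "strictly_quasi_concave_on S f" and "convex S"
    and "x \<in> S" "y \<in> S" and "\<forall>z\<in>S. f z \<le> f x" "\<forall>z\<in>S. f z \<le> f y"
  shows "x = y"
proof (rule ccontr)
  assume "x \<noteq> y"
  define m where "m = (1/2::real) *\<^sub>R x + (1 - 1/2) *\<^sub>R y"
  have "m \<in> S" unfolding m_def using \<open>convex S\<close> \<open>x \<in> S\<close> \<open>y \<in> S\<close> by (intro convexD) auto
  moreover have "\<forall>t. x \<noteq> y \<and> 0 < t \<and> t < 1 \<longrightarrow> min (f x) (f y) < f (t *\<^sub>R x + (1 - t) *\<^sub>R y)"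
    using sqc \<open>x \<in> S\<close> \<open>y \<in> S\<close> unfolding strictly_quasi_concave_on_def by blast
  from spec[OF this, of "1/2"] have "f m > min (f x) (f y)" using \<open>x \<noteq> y\<close> unfolding m_def by simp
  ultimately show False using assms(5,6) by (auto simp: min_def split: if_splits)
qed

lemma anticoercive_attains_max:
  fixes f :: "'a::real_normed_vector \<Rightarrow> real"
  assumes cpt: "\<And>r. compact (S \<inter> cball 0 r)" and cont: "continuous_on S f" and "a \<in> S"
    and anti: "\<forall>M. \<exists>R. \<forall>v\<in>S. R \<le> norm v \<longrightarrow> f v \<le> M"
  shows "\<exists>v0\<in>S. \<forall>v\<in>S. f v \<le> f v0"
proof -
  obtain R where R: "\<forall>v\<in>S. R \<le> norm v \<longrightarrow> f v \<le> f a - 1" using anti by blast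
  define K where "K = S \<inter> cball 0 R"
  have "a \<in> K" using R \<open>a \<in> S\<close> unfolding K_def by force
  then obtain v0 where "v0 \<in> K" and v0_max: "\<forall>v\<in>K. f v \<le> f v0"
    using continuous_attains_sup[OF cpt[of R] _ continuous_on_subset[OF cont]] unfolding K_def by blast
  have "f v \<le> f v0" if "v \<in> S" for v
  proof (cases "v \<in> K")
    case False
    then have "f v \<le> f a - 1" using R that unfolding K_def by simp
    then show ?thesis using v0_max \<open>a \<in> K\<close> by fastforce
  qed (use v0_max in blast)
  with \<open>v0 \<in> K\<close> show ?thesis unfolding K_def by blast
qed

(* The anticoercivity, uniform on bounded sets, keeps the maximisers bounded along the convergent
   sequence ws, and every limit point of them is a maximiser at w0. *)
lemma argmax_subseq_tendsto:
  fixes \<Phi> :: "'a::real_normed_vector \<Rightarrow> real"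
  assumes cont: "\<And>x. isCont \<Phi> x" and cpt: "\<And>r. compact (V \<inter> cball 0 r)" and "0 \<in> V"
    and anti: "\<forall>r M. \<exists>R. \<forall>v\<in>V. \<forall>w\<in>W. norm w \<le> r \<and> norm v \<ge> R \<longrightarrow> \<Phi> (v + w) \<le> M"
    and ws: "\<And>n. ws n \<in> W" "ws \<longlonglongrightarrow> w0"
    and vs: "\<And>n. vs n \<in> V" "\<And>n v. v \<in> V \<Longrightarrow> \<Phi> (v + ws n) \<le> \<Phi> (vs n + ws n)"
    and unique: "\<And>v. v \<in> V \<Longrightarrow> \<forall>v'\<in>V. \<Phi> (v' + w0) \<le> \<Phi> (v + w0) \<Longrightarrow> v = v0"
  obtains r where "strict_mono r" "(vs \<circ> r) \<longlonglongrightarrow> v0"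
proof -
  obtain b where b: "\<And>n. norm (ws n) \<le> b"
    using convergent_imp_Bseq[OF convergentI[OF ws(2)]] by (auto simp: Bseq_def)
  have "(\<lambda>n. \<Phi> (ws n)) \<longlonglongrightarrow> \<Phi> w0" by (rule isCont_tendsto_compose[OF cont ws(2)])
  then obtain N where N: "\<And>n. n \<ge> N \<Longrightarrow> \<Phi> w0 - 1 < \<Phi> (ws n)"
    using order_tendstoD(1)[of _ "\<Phi> w0" sequentially "\<Phi> w0 - 1"] by (auto simp: eventually_sequentially)
  obtain R where R: "\<forall>v\<in>V. \<forall>w\<in>W. norm w \<le> b \<and> norm v \<ge> R \<longrightarrow> \<Phi> (v + w) \<le> \<Phi> w0 - 1"
    using anti by blast
  have bounded: "vs (k + N) \<in> V \<inter> cball 0 R" for k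
  proof -
    have "\<not> R \<le> norm (vs (k + N))"
    proof
      assume "R \<le> norm (vs (k + N))"
      then have "\<Phi> (vs (k + N) + ws (k + N)) \<le> \<Phi> w0 - 1" using R b vs(1) ws(1) by blast
      moreover have "\<Phi> (0 + ws (k + N)) \<le> \<Phi> (vs (k + N) + ws (k + N))" by (rule vs(2)[OF \<open>0 \<in> V\<close>])
      ultimately show False using N[of "k + N"] by simp
    qed
    then show ?thesis using vs(1) by simp
  qed
  obtain l r where "l \<in> V \<inter> cball 0 R" "strict_mono r" and lim: "((\<lambda>k. vs (k + N)) \<circ> r) \<longlonglongrightarrow> l"
    using seq_compactE[OF compact_imp_seq_compact[OF cpt], of "\<lambda>k. vs (k + N)"] bounded by blast
  have ws_lim: "((\<lambda>k. ws (k + N)) \<circ> r) \<longlonglongrightarrow> w0"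
    by (rule LIMSEQ_subseq_LIMSEQ[OF LIMSEQ_ignore_initial_segment[OF ws(2)] \<open>strict_mono r\<close>])
  have "\<Phi> (v + w0) \<le> \<Phi> (l + w0)" if "v \<in> V" for v
  proof (rule tendsto_le[OF trivial_limit_sequentially])
    show "(\<lambda>k. \<Phi> (vs (r k + N) + ws (r k + N))) \<longlonglongrightarrow> \<Phi> (l + w0)"
      using isCont_tendsto_compose[OF cont tendsto_add[OF lim ws_lim]] by (simp add: o_def)
    show "(\<lambda>k. \<Phi> (v + ws (r k + N))) \<longlonglongrightarrow> \<Phi> (v + w0)"
      using isCont_tendsto_compose[OF cont tendsto_add[OF tendsto_const ws_lim]] by (simp add: o_def)
    show "\<forall>\<^sub>F k in sequentially. \<Phi> (v + ws (r k + N)) \<le> \<Phi> (vs (r k + N) + ws (r k + N))"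
      using vs(2)[OF that] by simp
  qed
  then have "l = v0" using unique \<open>l \<in> V \<inter> cball 0 R\<close> by blast
  moreover have "strict_mono (\<lambda>k. r k + N)" using \<open>strict_mono r\<close> by (simp add: strict_mono_def)
  ultimately show thesis using that lim by (simp add: o_def)
qed

lemma clarke_dd_nonneg_sequentially:
  fixes \<Phi> :: "'a::real_normed_vector \<Rightarrow> real"
  assumes "y \<longlonglongrightarrow> x" and tpos: "\<And>n. 0 < t n" and "t \<longlonglongrightarrow> 0"
    and incr: "\<And>n. \<Phi> (y n) \<le> \<Phi> (y n + t n *\<^sub>R h)"
  shows "0 \<le> clarke_dd \<Phi> x h"
  unfolding clarke_dd_def
proof (rule Limsup_greatest)
  have "filterlim t (at_right 0) sequentially"
    using tpos \<open>t \<longlonglongrightarrow> 0\<close> by (intro tendsto_imp_filterlim_at_right) auto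
  with \<open>y \<longlonglongrightarrow> x\<close> have lim: "filterlim (\<lambda>n. (y n, t n)) (nhds x \<times>\<^sub>F at_right 0) sequentially"
    by (rule filterlim_Pair)
  fix P assume "eventually P (nhds x \<times>\<^sub>F at_right (0::real))"
  then have "eventually (\<lambda>n. P (y n, t n)) sequentially" using lim by (simp add: filterlim_iff)
  then obtain n where "P (y n, t n)" unfolding eventually_sequentially by blast
  moreover have "0 \<le> (\<Phi> (y n + t n *\<^sub>R h) - \<Phi> (y n)) / t n" using incr[of n] tpos[of n] by simp
  ultimately show "0 \<le> (SUP z\<in>Collect P. (\<lambda>(y, t). ereal ((\<Phi> (y + t *\<^sub>R h) - \<Phi> y) / t)) z)"
    by (intro SUP_upper2[of "(y n, t n)"]) auto
qed

(* For a direction h = v + w the points y = s (wbar + t w) + wbar - t v satisfy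
   \<Phi> y \<le> \<Phi> (s wbar + wbar) \<le> \<Phi> (y + t h), and they tend to s wbar + wbar along t \<down> 0. *)
lemma clarke_critical_if_saddle:
  fixes \<Phi> :: "'a::real_normed_vector \<Rightarrow> real"
  assumes subV: "subspace V" and subW: "subspace W" and dsum: "\<forall>u. \<exists>v\<in>V. \<exists>w\<in>W. u = v + w"
    and "wbar \<in> W" and sV: "\<And>w. w \<in> W \<Longrightarrow> s w \<in> V"
    and s_ge: "\<And>w v. w \<in> W \<Longrightarrow> v \<in> V \<Longrightarrow> \<Phi> (v + w) \<le> \<Phi> (s w + w)"
    and wbar_min: "\<And>w. w \<in> W \<Longrightarrow> \<Phi> (s wbar + wbar) \<le> \<Phi> (s w + w)"
    and ray: "\<And>w. w \<in> W \<Longrightarrow> \<exists>t. (\<forall>n. 0 < t n) \<and> t \<longlonglongrightarrow> 0 \<and> (\<lambda>n. s (wbar + t n *\<^sub>R w)) \<longlonglongrightarrow> s wbar"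
  shows "0 \<in> clarke_subdiff \<Phi> (s wbar + wbar)"
  unfolding clarke_subdiff_def
proof (intro CollectI allI)
  fix h
  obtain v w where "v \<in> V" "w \<in> W" and h: "h = v + w" using dsum by blast
  obtain t where tpos: "\<And>n. 0 < t n" and "t \<longlonglongrightarrow> 0"
    and s_lim: "(\<lambda>n. s (wbar + t n *\<^sub>R w)) \<longlonglongrightarrow> s wbar"
    using ray[OF \<open>w \<in> W\<close>] by blast
  define wt where "wt n = wbar + t n *\<^sub>R w" for n
  define y where "y n = s (wt n) + wbar - t n *\<^sub>R v" for n
  have wtW: "wt n \<in> W" for n unfolding wt_def using subW \<open>wbar \<in> W\<close> \<open>w \<in> W\<close>
    by (simp add: subspace_add subspace_scale)
  have "y \<longlonglongrightarrow> s wbar + wbar - 0 *\<^sub>R v"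
    unfolding y_def wt_def
    by (intro tendsto_diff[OF tendsto_add[OF s_lim tendsto_const] tendsto_scaleR[OF \<open>t \<longlonglongrightarrow> 0\<close> tendsto_const]])
  then have "y \<longlonglongrightarrow> s wbar + wbar" by simp
  moreover have "\<Phi> (y n) \<le> \<Phi> (y n + t n *\<^sub>R h)" for n
  proof -
    have "s (wt n) - t n *\<^sub>R v \<in> V" using subV sV[OF wtW] \<open>v \<in> V\<close> by (simp add: subspace_diff subspace_scale)
    moreover have "y n = (s (wt n) - t n *\<^sub>R v) + wbar" unfolding y_def by simp
    ultimately have "\<Phi> (y n) \<le> \<Phi> (s wbar + wbar)" using s_ge[OF \<open>wbar \<in> W\<close>] by simp
    also have "\<dots> \<le> \<Phi> (s (wt n) + wt n)" by (rule wbar_min[OF wtW])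
    also have "s (wt n) + wt n = y n + t n *\<^sub>R h" unfolding y_def wt_def h by (simp add: algebra_simps)
    finally show ?thesis .
  qed
  ultimately have "0 \<le> clarke_dd \<Phi> (s wbar + wbar) h"
    by (rule clarke_dd_nonneg_sequentially[OF _ tpos \<open>t \<longlonglongrightarrow> 0\<close>])
  then show "ereal (blinfun_apply 0 h) \<le> clarke_dd \<Phi> (s wbar + wbar) h" by (simp add: zero_ereal_def)
qed

lemma argmax_ray_tendsto:
  fixes \<Phi> :: "'a::real_normed_vector \<Rightarrow> real"
  assumes cont: "\<And>x. isCont \<Phi> x" and cpt: "\<And>r. compact (V \<inter> cball 0 r)" and "0 \<in> V"
    and subW: "subspace W" and "w0 \<in> W" "d \<in> W"
    and anti: "\<forall>r M. \<exists>R. \<forall>v\<in>V. \<forall>w\<in>W. norm w \<le> r \<and> norm v \<ge> R \<longrightarrow> \<Phi> (v + w) \<le> M"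
    and sV: "\<And>w. w \<in> W \<Longrightarrow> s w \<in> V"
    and s_ge: "\<And>w v. w \<in> W \<Longrightarrow> v \<in> V \<Longrightarrow> \<Phi> (v + w) \<le> \<Phi> (s w + w)"
    and unique: "\<And>w v. w \<in> W \<Longrightarrow> v \<in> V \<Longrightarrow> \<forall>v'\<in>V. \<Phi> (v' + w) \<le> \<Phi> (v + w) \<Longrightarrow> v = s w"
  shows "\<exists>t. (\<forall>n. 0 < t n) \<and> t \<longlonglongrightarrow> 0 \<and> (\<lambda>n. s (w0 + t n *\<^sub>R d)) \<longlonglongrightarrow> s w0"
proof -
  define ws where "ws n = w0 + (1 / Suc n) *\<^sub>R d" for n
  have wsW: "ws n \<in> W" for n
    unfolding ws_def using subW \<open>w0 \<in> W\<close> \<open>d \<in> W\<close> by (simp add: subspace_add subspace_scale)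
  have "(\<lambda>n. 1 / real (Suc n)) \<longlonglongrightarrow> 0" by (rule LIMSEQ_Suc[OF lim_const_over_n])
  then have "ws \<longlonglongrightarrow> w0 + 0 *\<^sub>R d" unfolding ws_def by (intro tendsto_add tendsto_scaleR tendsto_const)
  then have "ws \<longlonglongrightarrow> w0" by simp
  obtain r where "strict_mono r" "((\<lambda>n. s (ws n)) \<circ> r) \<longlonglongrightarrow> s w0"
    by (rule argmax_subseq_tendsto[OF cont cpt \<open>0 \<in> V\<close> anti, where vs = "\<lambda>n. s (ws n)"])
      (use \<open>ws \<longlonglongrightarrow> w0\<close> wsW sV s_ge unique[OF \<open>w0 \<in> W\<close>] in auto)
  moreover have "(\<lambda>n. 1 / real (Suc (r n))) \<longlonglongrightarrow> 0"
    using LIMSEQ_subseq_LIMSEQ[OF \<open>(\<lambda>n. 1 / real (Suc n)) \<longlonglongrightarrow> 0\<close> \<open>strict_mono r\<close>] by (simp add: o_def)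
  ultimately show ?thesis unfolding ws_def o_def by (intro exI[of _ "\<lambda>n. 1 / real (Suc (r n))"]) auto
qed

lemma anticoercive_unique_max:
  fixes f :: "'a::real_normed_vector \<Rightarrow> real"
  assumes cpt: "\<And>r. compact (S \<inter> cball 0 r)" and cont: "continuous_on S f" and "a \<in> S"
    and "convex S" and sqc: "strictly_quasi_concave_on S f"
    and anti: "\<forall>M. \<exists>R. \<forall>v\<in>S. R \<le> norm v \<longrightarrow> f v \<le> M"
  shows "\<exists>!v. v \<in> S \<and> (\<forall>v'\<in>S. f v' \<le> f v)"
proof (rule ex_ex1I)
  show "\<exists>v. v \<in> S \<and> (\<forall>v'\<in>S. f v' \<le> f v)"
    using anticoercive_attains_max[OF cpt cont \<open>a \<in> S\<close> anti] by blast
next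
  fix x y assume "x \<in> S \<and> (\<forall>v'\<in>S. f v' \<le> f x)" "y \<in> S \<and> (\<forall>v'\<in>S. f v' \<le> f y)"
  then show "x = y" using strictly_quasi_concave_on_max_unique[OF sqc \<open>convex S\<close>] by blast
qed

lemma marginal_max_attains_min:
  fixes \<Phi> :: "'a::real_normed_vector \<Rightarrow> real"
  assumes refl: "reflexive_space TYPE('a)" and "weakly_closed W" and "0 \<in> V" "0 \<in> W"
    and coercive: "\<forall>M. \<exists>R. \<forall>w\<in>W. norm w \<ge> R \<longrightarrow> \<Phi> w \<ge> M"
    and lsc: "\<forall>v\<in>V. weakly_lsc_on W (\<lambda>w. \<Phi> (v + w))"
    and sV: "\<And>w. w \<in> W \<Longrightarrow> s w \<in> V"
    and s_ge: "\<And>w v. w \<in> W \<Longrightarrow> v \<in> V \<Longrightarrow> \<Phi> (v + w) \<le> \<Phi> (s w + w)"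
  shows "\<exists>wbar\<in>W. \<forall>w\<in>W. \<Phi> (s wbar + wbar) \<le> \<Phi> (s w + w)"
proof (rule weakly_lsc_coercive_attains_min[OF refl \<open>weakly_closed W\<close>])
  show "weakly_lsc_on W (\<lambda>w. \<Phi> (s w + w))"
  proof (rule weakly_lsc_on_pointwise_max[where I = V and h = "\<lambda>v w. \<Phi> (v + w)"])
    show "\<And>w. w \<in> W \<Longrightarrow> \<exists>v\<in>V. \<Phi> (s w + w) = \<Phi> (v + w)" using sV by blast
  qed (use lsc s_ge in blast)+
  show "\<forall>M. \<exists>R. \<forall>w\<in>W. R \<le> norm w \<longrightarrow> M \<le> \<Phi> (s w + w)"
  proof
    fix M
    obtain R where "\<forall>w\<in>W. R \<le> norm w \<longrightarrow> M \<le> \<Phi> w" using coercive by blast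
    moreover have "\<Phi> w \<le> \<Phi> (s w + w)" if "w \<in> W" for w using s_ge[OF that \<open>0 \<in> V\<close>] by simp
    ultimately show "\<exists>R. \<forall>w\<in>W. R \<le> norm w \<longrightarrow> M \<le> \<Phi> (s w + w)" by (meson order_trans)
  qed
qed (use \<open>0 \<in> W\<close> in blast)

lemma INF_SUP_eq_saddle_value:
  fixes f :: "'v \<Rightarrow> 'w \<Rightarrow> real"
  assumes "wbar \<in> W" and sV: "\<And>w. w \<in> W \<Longrightarrow> s w \<in> V"
    and s_ge: "\<And>w v. w \<in> W \<Longrightarrow> v \<in> V \<Longrightarrow> f v w \<le> f (s w) w"
    and wbar_min: "\<And>w. w \<in> W \<Longrightarrow> f (s wbar) wbar \<le> f (s w) w"
  shows "(INF w\<in>W. SUP v\<in>V. f v w) = f (s wbar) wbar"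
proof -
  have "(SUP v\<in>V. f v w) = f (s w) w" if "w \<in> W" for w
    using sV[OF that] s_ge[OF that] by (intro cSup_eq_maximum) auto
  then have "(INF w\<in>W. SUP v\<in>V. f v w) = (INF w\<in>W. f (s w) w)" by (rule INF_cong[OF refl])
  also have "\<dots> = f (s wbar) wbar" using \<open>wbar \<in> W\<close> wbar_min by (intro cInf_eq_minimum) auto
  finally show ?thesis .
qed

theorem corollary10:
  fixes \<Phi> :: "'a::banach \<Rightarrow> real" and V W :: "'a set"
  assumes refl: "reflexive_space TYPE('a)"
    and subV: "subspace V" and subW: "subspace W"
    and dsum_int: "V \<inter> W = {0}"
    and dsum_span: "\<forall>u. \<exists>v\<in>V. \<exists>w\<in>W. u = v + w"
    and finV: "\<exists>B. finite B \<and> V = span B"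
    and lip: "locally_lipschitz \<Phi>"
    and i: "\<forall>M. \<exists>R. \<forall>w\<in>W. norm w \<ge> R \<longrightarrow> \<Phi> w \<ge> M"
    and ii: "\<forall>w\<in>W. strictly_quasi_concave_on V (\<lambda>v. \<Phi> (v + w))"
    and iii: "\<forall>r M. \<exists>R. \<forall>v\<in>V. \<forall>w\<in>W. norm w \<le> r \<and> norm v \<ge> R \<longrightarrow> \<Phi> (v + w) \<le> M"
    and iv: "\<forall>v\<in>V. weakly_lsc_on W (\<lambda>w. \<Phi> (v + w))"
  shows "(\<forall>w\<in>W. \<exists>!v. v \<in> V \<and> (\<forall>v'\<in>V. \<Phi> (v' + w) \<le> \<Phi> (v + w))) \<and>
    (\<exists>wbar\<in>W.
       let s = (\<lambda>w. THE v. v \<in> V \<and> (\<forall>v'\<in>V. \<Phi> (v' + w) \<le> \<Phi> (v + w)));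
           ubar = s wbar + wbar
       in (\<forall>w\<in>W. \<Phi> ubar \<le> \<Phi> (s w + w)) \<and>
          0 \<in> clarke_subdiff \<Phi> ubar \<and>
          \<Phi> ubar = (INF w\<in>W. SUP v\<in>V. \<Phi> (v + w)))"
proof -
  have cont: "\<And>x. isCont \<Phi> x" using lip by (rule locally_lipschitz_imp_isCont)
  obtain B where "finite B" and VB: "V = span B" using finV by blast
  have cpt: "compact (V \<inter> cball 0 r)" for r unfolding VB by (rule compact_span_inter_cball[OF \<open>finite B\<close>])
  have "0 \<in> V" "0 \<in> W" using subV subW by (simp_all add: subspace_0)
  have anti: "\<forall>M. \<exists>R. \<forall>v\<in>V. R \<le> norm v \<longrightarrow> \<Phi> (v + w) \<le> M" if "w \<in> W" for w
    using iii that by (meson order_refl)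
  have "closed W"
    using closed_subspace_if_coercive_anticoercive[OF cont subV subW dsum_span i] anti[OF \<open>0 \<in> W\<close>] by simp
  then have "weakly_closed W"
    using weakly_closed_finite_complement[OF \<open>finite B\<close> _ subW] dsum_int dsum_span unfolding VB by blast
  have unique_max: "\<exists>!v. v \<in> V \<and> (\<forall>v'\<in>V. \<Phi> (v' + w) \<le> \<Phi> (v + w))" if "w \<in> W" for w
  proof (rule anticoercive_unique_max[OF cpt _ \<open>0 \<in> V\<close> subspace_imp_convex[OF subV]])
    show "continuous_on V (\<lambda>v. \<Phi> (v + w))"
      by (intro continuous_at_imp_continuous_on ballI continuous_intros isCont_o2[OF _ cont])
  qed (use ii anti that in auto)
  define s where "s = (\<lambda>w. THE v. v \<in> V \<and> (\<forall>v'\<in>V. \<Phi> (v' + w) \<le> \<Phi> (v + w)))"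
  have s_max: "s w \<in> V \<and> (\<forall>v'\<in>V. \<Phi> (v' + w) \<le> \<Phi> (s w + w))" if "w \<in> W" for w
    unfolding s_def by (rule theI'[OF unique_max[OF that]])
  have sV: "s w \<in> V" if "w \<in> W" for w using s_max[OF that] by (rule conjunct1)
  have s_ge: "\<Phi> (v + w) \<le> \<Phi> (s w + w)" if "w \<in> W" "v \<in> V" for w v
    using s_max[OF that(1)] that(2) by blast
  have s_unique: "v = s w" if "w \<in> W" "v \<in> V" "\<forall>v'\<in>V. \<Phi> (v' + w) \<le> \<Phi> (v + w)" for w v
    using unique_max[OF that(1)] s_max[OF that(1)] that(2,3) by blast
  obtain wbar where "wbar \<in> W" and wbar_min: "\<And>w. w \<in> W \<Longrightarrow> \<Phi> (s wbar + wbar) \<le> \<Phi> (s w + w)"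
    using marginal_max_attains_min[OF refl \<open>weakly_closed W\<close> \<open>0 \<in> V\<close> \<open>0 \<in> W\<close> i iv sV s_ge] by blast
  have "0 \<in> clarke_subdiff \<Phi> (s wbar + wbar)"
    using argmax_ray_tendsto[where s = s and \<Phi> = \<Phi>,
        OF cont cpt \<open>0 \<in> V\<close> subW \<open>wbar \<in> W\<close> _ iii sV s_ge s_unique]
    by (intro clarke_critical_if_saddle[where s = s and \<Phi> = \<Phi>,
        OF subV subW dsum_span \<open>wbar \<in> W\<close> sV s_ge wbar_min])
  moreover have "(INF w\<in>W. SUP v\<in>V. \<Phi> (v + w)) = \<Phi> (s wbar + wbar)"
    using INF_SUP_eq_saddle_value[where f = "\<lambda>v w. \<Phi> (v + w)" and s = s,
        OF \<open>wbar \<in> W\<close> sV s_ge wbar_min] by simp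
  ultimately show ?thesis
    unfolding s_def[symmetric] unfolding Let_def using unique_max \<open>wbar \<in> W\<close> wbar_min
    by (intro conjI ballI bexI[of _ wbar]) auto
qed

end
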